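(* The number of decomposable orientations of the $n$-dimensional cube (all of which are unique sink orientations) is $2^{\Theta(2^n)}$.
   Context: Let $Q^n = 2^{[n]}$ be the vertex set of the $n$-cube, with $u,v$ adjacent iff $|u\oplus v|=1$; for $J\subseteq[n]$ and $v\in Q^n$ the face $F_{J,v}=\{u : v\oplus u\subseteq J\}$ has dimension $|J|$. For an orientation of the cube's edges and a face $F_{J,v}$, a coordinate $j\in J$ is combed in that face if all edges of the face in direction $j$ are directed the same way (all from the endpoint not containing $j$ to the endpoint containing $j$, or all the other way). An orientation is decomposable if every face of dimension at least $1$ has a combed coordinate. A unique sink orientation is an orientation in which every nonempty face has a unique sink. *)

theory Defs
  imports Complex_Main
begin

text \<open>Vertices of the n-cube: subsets of [n], here realised as {0..<n}.\<close>
definition cube :: "nat \<Rightarrow> nat set set" where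
  "cube n = Pow {..<n}"

definition symdiff :: "nat set \<Rightarrow> nat set \<Rightarrow> nat set" where
  "symdiff u v = (u - v) \<union> (v - u)"

definition adjacent :: "nat set \<Rightarrow> nat set \<Rightarrow> bool" where
  "adjacent u v \<longleftrightarrow> card (symdiff u v) = 1"

text \<open>An orientation of the n-cube: a set of directed edges (u,w) meaning u \<rightarrow> w,
  containing exactly one direction of every edge of the cube and nothing else.\<close>
definition orientation :: "nat \<Rightarrow> (nat set \<times> nat set) set \<Rightarrow> bool" where
  "orientation n D \<longleftrightarrow>
     D \<subseteq> cube n \<times> cube n \<and>
     (\<forall>(u, w) \<in> D. adjacent u w) \<and>
     (\<forall>u \<in> cube n. \<forall>w \<in> cube n. adjacent u w \<longrightarrow> ((u, w) \<in> D \<longleftrightarrow> (w, u) \<notin> D))"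

definition face :: "nat \<Rightarrow> nat set \<Rightarrow> nat set \<Rightarrow> nat set set" where
  "face n J v = {u \<in> cube n. symdiff v u \<subseteq> J}"

definition combed :: "nat \<Rightarrow> (nat set \<times> nat set) set \<Rightarrow> nat set \<Rightarrow> nat set \<Rightarrow> nat \<Rightarrow> bool" where
  "combed n D J v j \<longleftrightarrow> j \<in> J \<and>
     ((\<forall>u \<in> face n J v. j \<notin> u \<longrightarrow> (u, insert j u) \<in> D) \<or>
      (\<forall>u \<in> face n J v. j \<notin> u \<longrightarrow> (insert j u, u) \<in> D))"

definition decomposable :: "nat \<Rightarrow> (nat set \<times> nat set) set \<Rightarrow> bool" where
  "decomposable n D \<longleftrightarrow> orientation n D \<and>
     (\<forall>J v. J \<subseteq> {..<n} \<and> v \<in> cube n \<and> 1 \<le> card J \<longrightarrow> (\<exists>j \<in> J. combed n D J v j))"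

definition is_sink :: "(nat set \<times> nat set) set \<Rightarrow> nat set set \<Rightarrow> nat set \<Rightarrow> bool" where
  "is_sink D F s \<longleftrightarrow> s \<in> F \<and> (\<forall>u \<in> F. adjacent s u \<longrightarrow> (u, s) \<in> D)"

definition uso :: "nat \<Rightarrow> (nat set \<times> nat set) set \<Rightarrow> bool" where
  "uso n D \<longleftrightarrow> orientation n D \<and>
     (\<forall>J v. J \<subseteq> {..<n} \<and> v \<in> cube n \<longrightarrow> (\<exists>!s. is_sink D (face n J v) s))"

end

theory Submission
  imports Defs
begin

text \<open>
  If coordinate \<open>j\<close> is combed in a face, the face splits into two facets joined by
  \<open>j\<close>-edges that all point into one of them, and the sinks of the face are exactly the
  sinks of that facet; unique sinks therefore propagate by induction on the dimension.
  The same splitting shows that the restriction of a decomposable orientation to a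
  \<open>(k+1)\<close>-face is determined by the combed coordinate, its direction and the restrictions
  to the two facets, so there are at most \<open>r(k+1) = 2(k+1) r(k)\<^sup>2 \<le> 2^2^(k+2)\<close> of them.
  Conversely, combing every coordinate except \<open>0\<close> upwards and orienting the \<open>2^(n-1)\<close>
  edges in direction \<open>0\<close> arbitrarily gives \<open>2^2^(n-1)\<close> distinct decomposable orientations.
\<close>

lemma symdiff_commute: "symdiff u w = symdiff w u"
  by (auto simp: symdiff_def)

lemma symdiff_symdiff_singleton: "symdiff (symdiff u {j}) {j} = u"
  by (auto simp: symdiff_def)

lemma adjacent_sym: "adjacent u w \<longleftrightarrow> adjacent w u"
  by (simp add: adjacent_def symdiff_commute)

lemma adjacent_irrefl: "\<not> adjacent v v"
  by (simp add: adjacent_def symdiff_def)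

lemma adjacent_iff_symdiff: "adjacent u w \<longleftrightarrow> (\<exists>i. w = symdiff u {i})"
proof -
  have "symdiff u w = {i} \<longleftrightarrow> w = symdiff u {i}" for i
    unfolding symdiff_def by blast
  moreover have "card (symdiff u w) = 1 \<longleftrightarrow> (\<exists>i. symdiff u w = {i})"
    by (simp add: card_1_singleton_iff)
  ultimately show ?thesis
    unfolding adjacent_def by simp
qed

lemma adjacent_symdiff_singleton: "adjacent u (symdiff u {j})"
  using adjacent_iff_symdiff by blast

lemma adjacent_across:
  assumes "adjacent u w" "j \<in> u \<longleftrightarrow> j \<notin> w"
  shows "w = symdiff u {j}"
  using assms unfolding adjacent_iff_symdiff symdiff_def by auto

lemma symdiff_singleton_not_mem: "i \<notin> u \<Longrightarrow> symdiff u {i} = insert i u"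
  by (auto simp: symdiff_def)

lemma adjacent_insert: "i \<notin> u \<Longrightarrow> adjacent u (insert i u)"
  using adjacent_symdiff_singleton symdiff_singleton_not_mem by metis

lemma orientation_asym: "orientation n D \<Longrightarrow> (u, w) \<in> D \<Longrightarrow> (w, u) \<notin> D"
  unfolding orientation_def by blast

lemma orientation_adjacent: "orientation n D \<Longrightarrow> (u, w) \<in> D \<Longrightarrow> adjacent u w"
  unfolding orientation_def by blast

lemma orientation_subset: "orientation n D \<Longrightarrow> D \<subseteq> cube n \<times> cube n"
  unfolding orientation_def by blast

lemma finite_cube: "finite (cube n)"
  by (simp add: cube_def)

lemma face_subset_cube: "face n J v \<subseteq> cube n"
  unfolding face_def by blast

lemma face_empty: "v \<in> cube n \<Longrightarrow> face n {} v = {v}"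
  unfolding face_def symdiff_def by auto

lemma face_full: "v \<in> cube n \<Longrightarrow> face n {..<n} v = cube n"
  unfolding face_def symdiff_def cube_def by auto

lemma face_half:
  assumes "j \<in> J"
  shows "{u \<in> face n J v. (j \<in> u) = b} = face n (J - {j}) (if b then insert j v else v - {j})"
  using assms unfolding face_def symdiff_def by auto

lemma symdiff_singleton_in_face:
  assumes "u \<in> face n J v" "j \<in> J" "j < n"
  shows "symdiff u {j} \<in> face n J v"
  using assms unfolding face_def symdiff_def cube_def by auto

section \<open>Combed coordinates and sinks\<close>

definition combed_towards ::
    "nat \<Rightarrow> (nat set \<times> nat set) set \<Rightarrow> nat set \<Rightarrow> nat set \<Rightarrow> nat \<Rightarrow> bool \<Rightarrow> bool" where
  "combed_towards n D J v j b \<longleftrightarrow> (\<forall>u \<in> face n J v. (j \<in> u) \<noteq> b \<longrightarrow> (u, symdiff u {j}) \<in> D)"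

lemma combed_imp_combed_towards:
  assumes "combed n D J v j"
  obtains b where "combed_towards n D J v j b"
proof -
  have up: "combed_towards n D J v j True"
    if "\<forall>u \<in> face n J v. j \<notin> u \<longrightarrow> (u, insert j u) \<in> D"
    using that unfolding combed_towards_def symdiff_def by auto
  have down: "combed_towards n D J v j False"
    if down_edges: "\<forall>u \<in> face n J v. j \<notin> u \<longrightarrow> (insert j u, u) \<in> D"
  proof -
    have "(u, u - {j}) \<in> D" if "u \<in> face n J v" "j \<in> u" for u
    proof -
      have "u - {j} \<in> face n J v"
        using that \<open>combed n D J v j\<close> unfolding combed_def face_def symdiff_def cube_def by auto
      then show ?thesis
        using down_edges \<open>j \<in> u\<close> insert_Diff[of j u] by fastforce
    qed
    then show ?thesis
      unfolding combed_towards_def symdiff_def by auto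
  qed
  show ?thesis
    using assms up down that unfolding combed_def by blast
qed

lemma is_sink_face_iff_half:
  assumes D: "orientation n D" and J: "J \<subseteq> {..<n}" and j: "j \<in> J"
    and towards: "combed_towards n D J v j b"
  shows "is_sink D (face n J v) s \<longleftrightarrow> is_sink D {u \<in> face n J v. (j \<in> u) = b} s"
proof
  assume sink: "is_sink D (face n J v) s"
  then have s: "s \<in> face n J v"
    by (simp add: is_sink_def)
  have "(j \<in> s) = b"
  proof (rule ccontr)
    assume "(j \<in> s) \<noteq> b"
    then have "(s, symdiff s {j}) \<in> D"
      using towards s unfolding combed_towards_def by blast
    moreover have "(symdiff s {j}, s) \<in> D"
      using sink symdiff_singleton_in_face[OF s j] j J adjacent_symdiff_singleton
      unfolding is_sink_def by blast
    ultimately show False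
      using orientation_asym[OF D] by blast
  qed
  then show "is_sink D {u \<in> face n J v. (j \<in> u) = b} s"
    using sink unfolding is_sink_def by blast
next
  assume sink: "is_sink D {u \<in> face n J v. (j \<in> u) = b} s"
  show "is_sink D (face n J v) s"
    unfolding is_sink_def
  proof (intro conjI ballI impI)
    fix u assume u: "u \<in> face n J v" "adjacent s u"
    show "(u, s) \<in> D"
    proof (cases "(j \<in> u) = b")
      case True
      then show ?thesis using sink u unfolding is_sink_def by blast
    next
      case False
      then have "s = symdiff u {j}"
        using sink u(2) adjacent_across[of u s j] adjacent_sym unfolding is_sink_def by blast
      then show ?thesis
        using towards u(1) False unfolding combed_towards_def by blast
    qed
  qed (use sink in \<open>simp add: is_sink_def\<close>)
qed

lemma decomposable_orientation: "decomposable n D \<Longrightarrow> orientation n D"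
  by (simp add: decomposable_def)

lemma decomposable_combed:
  assumes "decomposable n D" "J \<subseteq> {..<n}" "v \<in> cube n" "J \<noteq> {}"
  obtains j b where "j \<in> J" "combed_towards n D J v j b"
proof -
  have "1 \<le> card J"
    using assms(2,4) finite_subset[OF assms(2)] by (simp add: Suc_le_eq card_gt_0_iff)
  then obtain j where "j \<in> J" "combed n D J v j"
    using assms(1-3) unfolding decomposable_def by blast
  then show ?thesis
    using combed_imp_combed_towards that by blast
qed

lemma half_vertex_in_cube:
  "v \<in> cube n \<Longrightarrow> j < n \<Longrightarrow> (if b then insert j v else v - {j}) \<in> cube n"
  by (auto simp: cube_def)

lemma decomposable_unique_sink:
  assumes dec: "decomposable n D"
  shows "J \<subseteq> {..<n} \<Longrightarrow> v \<in> cube n \<Longrightarrow> \<exists>!s. is_sink D (face n J v) s"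
proof (induction "card J" arbitrary: J v)
  case 0
  then have "face n J v = {v}"
    using finite_subset[of J "{..<n}"] face_empty by auto
  then show ?case
    unfolding is_sink_def using adjacent_irrefl by auto
next
  case (Suc k)
  then have "J \<noteq> {}"
    by auto
  then obtain j b where j: "j \<in> J" and towards: "combed_towards n D J v j b"
    using decomposable_combed[OF dec Suc.prems] by blast
  let ?w = "if b then insert j v else v - {j}"
  have "\<exists>!s. is_sink D (face n (J - {j}) ?w) s"
    using Suc j half_vertex_in_cube[of v n j b] by (intro Suc.hyps) auto
  moreover have "is_sink D (face n J v) s \<longleftrightarrow> is_sink D (face n (J - {j}) ?w) s" for s
    using is_sink_face_iff_half[OF decomposable_orientation[OF dec] Suc.prems(1) j towards]
    by (simp add: face_half[OF j])
  ultimately show ?case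
    by blast
qed

lemma decomposable_imp_uso: "decomposable n D \<Longrightarrow> uso n D"
  unfolding uso_def using decomposable_orientation decomposable_unique_sink by blast

section \<open>Counting restrictions to faces\<close>

definition edges_across :: "nat \<Rightarrow> nat set \<Rightarrow> nat set \<Rightarrow> nat \<Rightarrow> bool \<Rightarrow> (nat set \<times> nat set) set" where
  "edges_across n J v j b = {(u, symdiff u {j}) | u. u \<in> face n J v \<and> (j \<in> u) \<noteq> b}"

lemma edges_across_subset:
  assumes "J \<subseteq> {..<n}" "j \<in> J" "combed_towards n D J v j b"
  shows "edges_across n J v j b \<subseteq> D \<inter> (face n J v \<times> face n J v)"
proof
  fix e assume "e \<in> edges_across n J v j b"
  then obtain u where e: "e = (u, symdiff u {j})" and u: "u \<in> face n J v" "(j \<in> u) \<noteq> b"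
    unfolding edges_across_def by blast
  have "symdiff u {j} \<in> face n J v"
    using symdiff_singleton_in_face[OF u(1)] assms(1,2) by blast
  then show "e \<in> D \<inter> (face n J v \<times> face n J v)"
    using assms(3) u e unfolding combed_towards_def by blast
qed

lemma restriction_split:
  assumes D: "orientation n D" and J: "J \<subseteq> {..<n}" and j: "j \<in> J"
    and towards: "combed_towards n D J v j b"
  defines "H c \<equiv> {u \<in> face n J v. (j \<in> u) = c}"
  shows "D \<inter> (face n J v \<times> face n J v) =
    D \<inter> (H False \<times> H False) \<union> D \<inter> (H True \<times> H True) \<union> edges_across n J v j b"
    (is "_ = ?S")
proof (rule equalityI)
  show "D \<inter> (face n J v \<times> face n J v) \<subseteq> ?S"
  proof
    fix p assume p: "p \<in> D \<inter> (face n J v \<times> face n J v)"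
    then obtain a c where ac: "p = (a, c)" "(a, c) \<in> D" "a \<in> face n J v" "c \<in> face n J v"
      by auto
    show "p \<in> ?S"
    proof (cases "(j \<in> a) = (j \<in> c)")
      case True
      have "a \<in> H (j \<in> a)" "c \<in> H (j \<in> a)"
        using ac True unfolding H_def by auto
      then show ?thesis
        using ac by (cases "j \<in> a") auto
    next
      case False
      then have c: "c = symdiff a {j}"
        using adjacent_across orientation_adjacent[OF D ac(2)] by blast
      have "(j \<in> a) \<noteq> b"
      proof
        assume "(j \<in> a) = b"
        then have "(c, a) \<in> D"
          using towards ac(4) False c symdiff_symdiff_singleton unfolding combed_towards_def by fastforce
        then show False
          using orientation_asym[OF D ac(2)] by blast
      qed
      then show ?thesis
        using ac c unfolding edges_across_def by blast
    qed
  qed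
  have "H c \<subseteq> face n J v" for c
    unfolding H_def by blast
  then show "?S \<subseteq> D \<inter> (face n J v \<times> face n J v)"
    using edges_across_subset[OF J j towards] by blast
qed

definition face_restrictions :: "nat \<Rightarrow> nat set \<Rightarrow> nat set \<Rightarrow> (nat set \<times> nat set) set set" where
  "face_restrictions n J v = {D \<inter> (face n J v \<times> face n J v) | D. decomposable n D}"

lemma finite_face_restrictions: "finite (face_restrictions n J v)"
proof -
  have "face_restrictions n J v \<subseteq> Pow (cube n \<times> cube n)"
    unfolding face_restrictions_def using face_subset_cube by blast
  then show ?thesis
    using finite_cube finite_subset by blast
qed

lemma face_restrictions_cover:
  assumes J: "J \<subseteq> {..<n}" and v: "v \<in> cube n" and "J \<noteq> {}"
  shows "face_restrictions n J v \<subseteq> (\<Union>j \<in> J. \<Union>b. (\<lambda>(A, B). A \<union> B \<union> edges_across n J v j b) `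
    (face_restrictions n (J - {j}) (v - {j}) \<times> face_restrictions n (J - {j}) (insert j v)))"
proof
  fix E assume "E \<in> face_restrictions n J v"
  then obtain D where dec: "decomposable n D" and E: "E = D \<inter> (face n J v \<times> face n J v)"
    unfolding face_restrictions_def by blast
  obtain j b where j: "j \<in> J" and towards: "combed_towards n D J v j b"
    using decomposable_combed[OF dec J v \<open>J \<noteq> {}\<close>] by blast
  let ?A = "D \<inter> (face n (J - {j}) (v - {j}) \<times> face n (J - {j}) (v - {j}))"
  let ?B = "D \<inter> (face n (J - {j}) (insert j v) \<times> face n (J - {j}) (insert j v))"
  have "E = ?A \<union> ?B \<union> edges_across n J v j b"
    using restriction_split[OF decomposable_orientation[OF dec] J j towards]
      face_half[OF j, of n v False] face_half[OF j, of n v True] E by simp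
  moreover have "(?A, ?B) \<in> face_restrictions n (J - {j}) (v - {j}) \<times> face_restrictions n (J - {j}) (insert j v)"
    unfolding face_restrictions_def using dec by blast
  ultimately show "E \<in> (\<Union>j \<in> J. \<Union>b. (\<lambda>(A, B). A \<union> B \<union> edges_across n J v j b) `
    (face_restrictions n (J - {j}) (v - {j}) \<times> face_restrictions n (J - {j}) (insert j v)))"
    by (intro UN_I[OF j] UN_I[OF UNIV_I] image_eqI[where x = "(?A, ?B)"]) simp_all
qed

fun restriction_count_bound :: "nat \<Rightarrow> nat" where
  "restriction_count_bound 0 = 1"
| "restriction_count_bound (Suc k) = 2 * Suc k * restriction_count_bound k ^ 2"

lemma restriction_count_bound_le: "2 ^ (k + 2) * restriction_count_bound k \<le> 2 ^ 2 ^ (k + 1)"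
proof (induction k)
  case 0
  then show ?case by simp
next
  case (Suc k)
  have "Suc k \<le> 2 ^ k"
    by (induction k) auto
  then have factor: "2 * Suc k * restriction_count_bound k ^ 2 \<le> 2 ^ (k + 1) * restriction_count_bound k ^ 2"
    by (intro mult_right_mono) auto
  have "2 ^ (Suc k + 2) * restriction_count_bound (Suc k)
      = 2 ^ (k + 3) * (2 * Suc k * restriction_count_bound k ^ 2)"
    by (simp add: power_add)
  also have "\<dots> \<le> 2 ^ (k + 3) * (2 ^ (k + 1) * restriction_count_bound k ^ 2)"
    using factor by (rule mult_left_mono) simp
  also have "\<dots> = (2 ^ (k + 2) * restriction_count_bound k) ^ 2"
    by (simp add: power2_eq_square power_add)
  also have "\<dots> \<le> (2 ^ 2 ^ (k + 1)) ^ 2"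
    using Suc.IH by (rule power_mono) simp
  also have "\<dots> = 2 ^ 2 ^ (Suc k + 1)"
    by (simp flip: power_mult)
  finally show ?case .
qed

lemma card_UN_le_mult:
  assumes "finite I" "\<And>i. i \<in> I \<Longrightarrow> card (A i) \<le> K"
  shows "card (\<Union>i \<in> I. A i) \<le> card I * K"
proof -
  have "(\<Sum>i \<in> I. card (A i)) \<le> card I * K"
    using sum_bounded_above[of I "\<lambda>i. card (A i)" K] assms(2) by simp
  with card_UN_le[OF assms(1), of A] show ?thesis
    by linarith
qed

lemma card_face_restrictions_le:
  "J \<subseteq> {..<n} \<Longrightarrow> v \<in> cube n \<Longrightarrow> card (face_restrictions n J v) \<le> restriction_count_bound (card J)"
proof (induction "card J" arbitrary: J v)
  case 0
  then have F: "face n J v = {v}"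
    using finite_subset[of J "{..<n}"] face_empty by auto
  have "face_restrictions n J v \<subseteq> {{}}"
  proof
    fix E assume "E \<in> face_restrictions n J v"
    then obtain D where "decomposable n D" "E = D \<inter> ({v} \<times> {v})"
      unfolding face_restrictions_def F by blast
    moreover have "(v, v) \<notin> D"
      using orientation_adjacent[OF decomposable_orientation[OF \<open>decomposable n D\<close>]] adjacent_irrefl
      by blast
    ultimately show "E \<in> {{}}"
      by auto
  qed
  then have "card (face_restrictions n J v) \<le> card {{} :: (nat set \<times> nat set) set}"
    by (rule card_mono[rotated]) simp
  then show ?case
    using "0.hyps" by simp
next
  case (Suc k)
  let ?R = "\<lambda>j w. face_restrictions n (J - {j}) w"
  have J: "finite J" "J \<noteq> {}"
    using Suc.hyps(2) Suc.prems(1) finite_subset by auto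
  have IH: "card (?R j w) \<le> restriction_count_bound k" if "j \<in> J" "w \<in> cube n" for j w
  proof -
    have "k = card (J - {j})"
      using Suc.hyps(2) that(1) J(1) by simp
    then show ?thesis
      using Suc.hyps(1) Suc.prems(1) that(2) by blast
  qed
  have pieces: "card ((\<lambda>(A, B). A \<union> B \<union> edges_across n J v j b) ` (?R j (v - {j}) \<times> ?R j (insert j v)))
      \<le> restriction_count_bound k ^ 2" if "j \<in> J" for j b
  proof -
    have "insert j v \<in> cube n" "v - {j} \<in> cube n"
      using that Suc.prems by (auto simp: cube_def)
    then have "card (?R j (v - {j}) \<times> ?R j (insert j v)) \<le> restriction_count_bound k ^ 2"
      unfolding card_cartesian_product power2_eq_square using IH[OF that] by (intro mult_mono) auto
    moreover have "card ((\<lambda>(A, B). A \<union> B \<union> edges_across n J v j b) ` (?R j (v - {j}) \<times> ?R j (insert j v)))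
        \<le> card (?R j (v - {j}) \<times> ?R j (insert j v))"
      by (intro card_image_le finite_cartesian_product finite_face_restrictions)
    ultimately show ?thesis
      by linarith
  qed
  have "card (face_restrictions n J v) \<le> card (\<Union>j \<in> J. \<Union>b. (\<lambda>(A, B). A \<union> B \<union> edges_across n J v j b) `
      (?R j (v - {j}) \<times> ?R j (insert j v)))"
    using face_restrictions_cover[OF Suc.prems J(2)] J(1) finite_face_restrictions
    by (intro card_mono) auto
  also have "\<dots> \<le> card J * (card (UNIV :: bool set) * restriction_count_bound k ^ 2)"
    using pieces J(1) by (intro card_UN_le_mult) auto
  also have "\<dots> = restriction_count_bound (card J)"
    using Suc.hyps(2)[symmetric] by simp
  finally show ?case .
qed

lemma decomposable_subset: "decomposable n D \<Longrightarrow> D \<subseteq> cube n \<times> cube n"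
  by (simp add: decomposable_orientation orientation_subset)

lemma finite_decomposable: "finite {D. decomposable n D}"
proof -
  have "{D. decomposable n D} \<subseteq> Pow (cube n \<times> cube n)"
    using decomposable_subset by blast
  then show ?thesis
    by (rule finite_subset) (simp add: finite_cube)
qed

lemma card_decomposable_le: "card {D. decomposable n D} \<le> 2 ^ 2 ^ (n + 1)"
proof -
  have full: "face n {..<n} {} = cube n"
    by (rule face_full) (simp add: cube_def)
  have "{D. decomposable n D} \<subseteq> face_restrictions n {..<n} {}"
  proof
    fix D assume "D \<in> {D. decomposable n D}"
    then have "decomposable n D" "D = D \<inter> (face n {..<n} {} \<times> face n {..<n} {})"
      using decomposable_subset full by blast+
    then show "D \<in> face_restrictions n {..<n} {}"
      unfolding face_restrictions_def by blast
  qed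
  then have "card {D. decomposable n D} \<le> card (face_restrictions n {..<n} {})"
    by (rule card_mono[OF finite_face_restrictions])
  also have "\<dots> \<le> restriction_count_bound n"
    using card_face_restrictions_le[of "{..<n}" n "{}"] by (simp add: cube_def)
  also have "\<dots> \<le> 2 ^ (n + 2) * restriction_count_bound n"
    by simp
  also have "\<dots> \<le> 2 ^ 2 ^ (n + 1)"
    by (rule restriction_count_bound_le)
  finally show ?thesis .
qed

section \<open>A large family of decomposable orientations\<close>

definition orient_by :: "nat \<Rightarrow> (nat \<Rightarrow> nat set \<Rightarrow> bool) \<Rightarrow> (nat set \<times> nat set) set" where
  "orient_by n up =
     {(u, insert i u) | u i. u \<in> cube n \<and> i < n \<and> i \<notin> u \<and> up i u} \<union>
     {(insert i u, u) | u i. u \<in> cube n \<and> i < n \<and> i \<notin> u \<and> \<not> up i u}"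

lemma insert_eq_insert_not_mem: "insert i u = insert i' u \<Longrightarrow> i \<notin> u \<Longrightarrow> i = i'"
  by blast

lemma orient_by_up:
  assumes "i \<notin> u"
  shows "(u, insert i u) \<in> orient_by n up \<longleftrightarrow> u \<in> cube n \<and> i < n \<and> up i u"
proof
  assume "(u, insert i u) \<in> orient_by n up"
  then consider
      u' i' where "u = u'" "insert i u = insert i' u'" "u' \<in> cube n" "i' < n" "i' \<notin> u'" "up i' u'"
    | u' i' where "u = insert i' u'" "insert i u = u'" "i' \<notin> u'"
    unfolding orient_by_def by blast
  then show "u \<in> cube n \<and> i < n \<and> up i u"
  proof cases
    case 1
    then show ?thesis
      using insert_eq_insert_not_mem[of i u i'] assms by blast
  qed blast
next
  assume "u \<in> cube n \<and> i < n \<and> up i u"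
  then show "(u, insert i u) \<in> orient_by n up"
    unfolding orient_by_def using assms by blast
qed

lemma orient_by_down:
  assumes "i \<notin> u"
  shows "(insert i u, u) \<in> orient_by n up \<longleftrightarrow> u \<in> cube n \<and> i < n \<and> \<not> up i u"
proof
  assume "(insert i u, u) \<in> orient_by n up"
  then consider
      u' i' where "insert i u = u'" "u = insert i' u'" "i' \<notin> u'"
    | u' i' where "u = u'" "insert i u = insert i' u'" "u' \<in> cube n" "i' < n" "i' \<notin> u'" "\<not> up i' u'"
    unfolding orient_by_def by blast
  then show "u \<in> cube n \<and> i < n \<and> \<not> up i u"
  proof cases
    case 2
    then show ?thesis
      using insert_eq_insert_not_mem[of i u i'] assms by blast
  qed blast
next
  assume "u \<in> cube n \<and> i < n \<and> \<not> up i u"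
  then show "(insert i u, u) \<in> orient_by n up"
    unfolding orient_by_def using assms by blast
qed

lemma orient_by_memE:
  assumes "p \<in> orient_by n up"
  obtains u i where "u \<in> cube n" "i < n" "i \<notin> u" "p = (u, insert i u) \<or> p = (insert i u, u)"
  using assms unfolding orient_by_def by blast

lemma orientation_orient_by: "orientation n (orient_by n up)"
  unfolding orientation_def
proof (intro conjI ballI impI)
  show "orient_by n up \<subseteq> cube n \<times> cube n"
  proof
    fix p assume "p \<in> orient_by n up"
    then show "p \<in> cube n \<times> cube n"
      by (rule orient_by_memE) (auto simp: cube_def)
  qed
next
  fix p assume "p \<in> orient_by n up"
  then show "case p of (u, w) \<Rightarrow> adjacent u w"
    by (rule orient_by_memE) (auto simp: adjacent_insert adjacent_sym)
next
  fix u w assume u: "u \<in> cube n" and w: "w \<in> cube n" and "adjacent u w"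
  then obtain i where i: "w = symdiff u {i}"
    using adjacent_iff_symdiff by blast
  show "(u, w) \<in> orient_by n up \<longleftrightarrow> (w, u) \<notin> orient_by n up"
  proof (cases "i \<in> u")
    case False
    then have "w = insert i u" "i < n"
      using i w symdiff_singleton_not_mem by (auto simp: cube_def)
    then show ?thesis
      using orient_by_up[OF False] orient_by_down[OF False] u by simp
  next
    case True
    then have "u = insert i w" "i \<notin> w" "i < n"
      using i u unfolding symdiff_def cube_def by auto
    then show ?thesis
      using orient_by_up[of i w] orient_by_down[of i w] w by simp
  qed
qed

lemma combed_single_edge:
  assumes D: "orientation n D" and "j < n" "v \<in> cube n"
  shows "combed n D {j} v j"
proof -
  have lower: "u = v - {j}" if "u \<in> face n {j} v" "j \<notin> u" for u
    using that unfolding face_def symdiff_def by auto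
  have "v - {j} \<in> cube n" "insert j (v - {j}) \<in> cube n"
    using assms(2,3) by (auto simp: cube_def)
  then have "(v - {j}, insert j (v - {j})) \<in> D \<or> (insert j (v - {j}), v - {j}) \<in> D"
    using D adjacent_insert[of j "v - {j}"] unfolding orientation_def by blast
  then show ?thesis
    unfolding combed_def using lower by blast
qed

lemma decomposable_orient_by:
  assumes "\<And>i u. 0 < i \<Longrightarrow> up i u"
  shows "decomposable n (orient_by n up)"
  unfolding decomposable_def
proof (intro conjI allI impI orientation_orient_by)
  fix J v assume "J \<subseteq> {..<n} \<and> v \<in> cube n \<and> 1 \<le> card J"
  then have J: "J \<subseteq> {..<n}" "J \<noteq> {}" and v: "v \<in> cube n"
    by auto
  show "\<exists>j \<in> J. combed n (orient_by n up) J v j"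
  proof (cases "J = {0}")
    case True
    then have "0 < n"
      using J(1) by blast
    then show ?thesis
      using combed_single_edge[OF orientation_orient_by _ v] True by blast
  next
    case False
    then obtain j where j: "j \<in> J" "0 < j"
      using J(2) by auto
    have "u \<in> face n J v \<Longrightarrow> j \<notin> u \<Longrightarrow> (u, insert j u) \<in> orient_by n up" for u
      using orient_by_up[of j u n up] assms[OF j(2)] face_subset_cube J(1) j(1) by blast
    then have "combed n (orient_by n up) J v j"
      unfolding combed_def using j(1) by blast
    with j show ?thesis
      by blast
  qed
qed

lemma card_decomposable_ge:
  assumes "1 \<le> n"
  shows "2 ^ 2 ^ (n - 1) \<le> card {D. decomposable n D}"
proof -
  define L where "L = {u \<in> cube n. 0 \<notin> u}"
  define orient_of where "orient_of S = orient_by n (\<lambda>i u. 0 < i \<or> u \<in> S)" for S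
  have "L = Pow ({..<n} - {0})"
    unfolding L_def cube_def by blast
  moreover have "card ({..<n} - {0}) = n - 1"
    using assms by simp
  ultimately have card_L: "card L = 2 ^ (n - 1)"
    by (simp add: card_Pow)
  have "inj_on orient_of (Pow L)"
  proof (rule inj_onI)
    fix S S' assume S: "S \<in> Pow L" and S': "S' \<in> Pow L" and eq: "orient_of S = orient_of S'"
    have "u \<in> S \<longleftrightarrow> (u, insert 0 u) \<in> orient_of S" if "u \<in> L" for u S
    proof -
      have "0 \<notin> u" "u \<in> cube n"
        using that unfolding L_def by blast+
      then show ?thesis
        using orient_by_up[of 0 u n] assms unfolding orient_of_def by simp
    qed
    then have "u \<in> S \<longleftrightarrow> u \<in> S'" if "u \<in> L" for u
      using that eq by blast
    then show "S = S'"
      using S S' by blast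
  qed
  moreover have "finite L"
    unfolding L_def using finite_cube by simp
  ultimately have "card (orient_of ` Pow L) = 2 ^ 2 ^ (n - 1)"
    using card_L by (simp add: card_image card_Pow)
  moreover have "orient_of ` Pow L \<subseteq> {D. decomposable n D}"
    unfolding orient_of_def using decomposable_orient_by[of "\<lambda>i u. 0 < i \<or> u \<in> _"] by blast
  ultimately show ?thesis
    using card_mono[OF finite_decomposable] by metis
qed

theorem theorem9:
  shows "(\<forall>n D. decomposable n D \<longrightarrow> uso n D) \<and>
         (\<exists>c1 c2 :: real. 0 < c1 \<and> 0 < c2 \<and>
            (\<exists>N. \<forall>n \<ge> N.
               2 powr (c1 * 2 ^ n) \<le> real (card {D. decomposable n D}) \<and>
               real (card {D. decomposable n D}) \<le> 2 powr (c2 * 2 ^ n)))"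
proof -
  have lower: "2 powr (1 / 2 * 2 ^ n) \<le> real (card {D. decomposable n D})" if "1 \<le> n" for n :: nat
  proof -
    have exponent: "1 / 2 * 2 ^ n = real (2 ^ (n - 1))"
      using that by (cases n) simp_all
    have "2 powr (1 / 2 * 2 ^ n) = real (2 ^ 2 ^ (n - 1))"
      unfolding exponent by (subst powr_realpow) simp_all
    also have "\<dots> \<le> real (card {D. decomposable n D})"
      using card_decomposable_ge[OF that] by (simp only: of_nat_le_iff)
    finally show ?thesis .
  qed
  have upper: "real (card {D. decomposable n D}) \<le> 2 powr (2 * 2 ^ n)" for n :: nat
  proof -
    have exponent: "2 * 2 ^ n = real (2 ^ (n + 1))"
      by simp
    have "real (card {D. decomposable n D}) \<le> real (2 ^ 2 ^ (n + 1))"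
      using card_decomposable_le[of n] by (simp only: of_nat_le_iff)
    also have "\<dots> = 2 powr (2 * 2 ^ n)"
      unfolding exponent by (subst powr_realpow) simp_all
    finally show ?thesis .
  qed
  show ?thesis
    using decomposable_imp_uso lower upper
    by (intro conjI allI impI exI[of _ "1 / 2"] exI[of _ 2] exI[of _ 1]) auto
qed

end
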